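(* Let $A,B\in L(\mathbb{R}^n,\mathbb{R}^n)$ be symmetric, let $I\subset\mathbb{R}$ be a non-empty open interval, and let $E:I\to L(\mathbb{R}^{n-m},\mathbb{R}^n)$ be differentiable with $E(t)$ injective for every $t\in I$. Suppose there is a differentiable $\mu:I\to\mathbb{R}$ with ${}^tE(t)BE(t)=\mu(t)\,{}^tE(t)AE(t)$ for every $t\in I$. If $\operatorname{rank}A>4m$, then $\mu$ is constant. *)

theory Defs
  imports "HOL-Analysis.Analysis"
begin

end

theory Submission
  imports Defs
begin

text \<open>Write \<open>C = B - \<mu>(t) A\<close> and \<open>D = E'(t)\<close>. The hypothesis says that \<open>E(t)\<close> is \<open>C\<close>-isotropic,
  \<open>E\<^sup>T C E = 0\<close>, and differentiating it gives \<open>D\<^sup>T C E + E\<^sup>T C D = \<mu>'(t) E\<^sup>T A E\<close>.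
  Since \<open>E\<^sup>T\<close> has rank \<open>n - m\<close> and annihilates \<open>C E\<close>, Sylvester's rank inequality gives
  \<open>rank (C E) \<le> m\<close>, so the left-hand side has rank at most \<open>2m\<close>. On the other hand,
  compressing \<open>A\<close> by the injective \<open>E\<close> loses rank at most \<open>2m\<close>, so \<open>rank (E\<^sup>T A E) \<ge> rank A - 2m > 2m\<close>.
  Hence \<open>\<mu>'(t) = 0\<close> everywhere on the interval.\<close>

lemma dim_kernel_add_dim_image:
  fixes f :: "'a::euclidean_space \<Rightarrow> 'b::euclidean_space"
  assumes lf: "linear f" and S: "subspace S"
  shows "dim {x \<in> S. f x = 0} + dim (f ` S) = dim S"
proof -
  define K where "K = {x \<in> S. f x = 0}"
  define T where "T = {y \<in> S. \<forall>x \<in> K. orthogonal x y}"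
  have K: "subspace K" "K \<subseteq> S"
    unfolding K_def using S lf by (auto simp: subspace_def linear_add linear_0 linear_scale)
  have T: "subspace T"
    unfolding T_def using S by (auto simp: subspace_def orthogonal_def inner_add_right)
  have dim_T: "dim T + dim K = dim S"
    unfolding T_def by (rule dim_subspace_orthogonal_to_vectors[OF K(1) S K(2)])
  have "inj_on f T"
  proof (subst linear_inj_on_iff_eq_0[OF lf T], intro ballI impI)
    fix x assume "x \<in> T" "f x = 0"
    then have "orthogonal x x" by (auto simp: T_def K_def)
    then show "x = 0" by (simp add: orthogonal_self)
  qed
  then have dim_fT: "dim (f ` T) = dim T"
    using dim_image_eq[OF lf] span_eq_iff[THEN iffD2, OF T] by metis
  have "f ` S \<subseteq> f ` T"
  proof
    fix z assume "z \<in> f ` S"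
    then obtain s where s: "s \<in> S" "z = f s" by auto
    obtain y w where y: "y \<in> span K" and w: "\<And>u. u \<in> span K \<Longrightarrow> orthogonal w u"
      and s_eq: "s = y + w"
      using orthogonal_subspace_decomp_exists[of K s] by metis
    have "y \<in> K" using y span_eq_iff[THEN iffD2, OF K(1)] by simp
    moreover have "w \<in> S"
      using subspace_diff[OF S s(1)] \<open>y \<in> K\<close> K(2) s_eq by (metis add_diff_cancel_left' subsetD)
    ultimately have "w \<in> T"
      using w by (auto simp: T_def orthogonal_commute span_base)
    moreover have "f s = f w" using s_eq \<open>y \<in> K\<close> lf by (simp add: linear_add K_def)
    ultimately show "z \<in> f ` T" using s by auto
  qed
  then have "f ` S = f ` T" by (auto simp: T_def)
  then show ?thesis using dim_T dim_fT by (simp add: K_def)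
qed

lemma sylvester_rank_inequality:
  fixes X :: "real^'n^'m" and Y :: "real^'p^'n"
  shows "rank X + rank Y \<le> rank (X ** Y) + CARD('n)"
proof -
  have range_Y: "subspace (range ((*v) Y))"
    by (simp add: subspace_UNIV linear_subspace_image)
  have image_range_Y: "(*v) X ` range ((*v) Y) = range ((*v) (X ** Y))"
    by (auto simp: image_comp o_def matrix_vector_mul_assoc)
  have "dim {x \<in> range ((*v) Y). X *v x = 0} + rank (X ** Y) = rank Y"
    using dim_kernel_add_dim_image[OF matrix_vector_mul_linear[of X] range_Y]
    by (simp add: image_range_Y rank_dim_range)
  moreover have "dim {x \<in> range ((*v) Y). X *v x = 0} \<le> dim {x. X *v x = 0}"
    by (rule dim_subset) auto
  moreover have "dim {x. X *v x = 0} + rank X = CARD('n)"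
    using dim_kernel_add_dim_image[OF matrix_vector_mul_linear[of X] subspace_UNIV]
    by (simp add: rank_dim_range)
  ultimately show ?thesis by linarith
qed

corollary rank_add_rank_le_of_mult_eq_0:
  fixes X :: "real^'n^'m" and Y :: "real^'p^'n"
  assumes "X ** Y = 0"
  shows "rank X + rank Y \<le> CARD('n)"
  using sylvester_rank_inequality[of X Y] assms by simp

lemma rank_add_le:
  fixes X Y :: "real^'n^'m"
  shows "rank (X + Y) \<le> rank X + rank Y"
proof -
  have "range ((*v) (X + Y)) \<subseteq> {x + y |x y. x \<in> range ((*v) X) \<and> y \<in> range ((*v) Y)}"
    by (auto simp: matrix_vector_mult_add_rdistrib)
  then have "rank (X + Y) \<le> dim {x + y |x y. x \<in> range ((*v) X) \<and> y \<in> range ((*v) Y)}"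
    by (simp add: rank_dim_range dim_subset)
  then show ?thesis
    using dim_sums_Int[of "range ((*v) X)" "range ((*v) Y)"]
    by (simp add: rank_dim_range subspace_UNIV linear_subspace_image)
qed

lemma rank_scaleR:
  fixes X :: "real^'n^'m"
  assumes "c \<noteq> 0"
  shows "rank (c *\<^sub>R X) = rank X"
proof -
  have rank_scaleR_le: "rank (a *\<^sub>R Y) \<le> rank Y" for a and Y :: "real^'n^'m"
    by (metis matrix_mul_lid rank_mul_le_right scalar_matrix_assoc)
  from this[of "inverse c" "c *\<^sub>R X"] this[of c X] assms show ?thesis by simp
qed

lemma rank_le_rank_transpose_mult_mult:
  fixes A :: "real^'n^'n" and E :: "real^'k^'n"
  assumes "inj ((*v) E)"
  shows "rank A + 2 * CARD('k) \<le> rank (transpose E ** A ** E) + 2 * CARD('n)"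
proof -
  have "rank E = CARD('k)" "rank (transpose E) = CARD('k)"
    using assms full_rank_injective rank_transpose by metis+
  then show ?thesis
    using sylvester_rank_inequality[of A E] sylvester_rank_inequality[of "transpose E" "A ** E"]
    by (simp add: matrix_mul_assoc)
qed

lemma rank_symmetrization_le_of_isotropic:
  fixes C :: "real^'n^'n" and E D :: "real^'k^'n"
  assumes "inj ((*v) E)" and "transpose C = C" and "transpose E ** C ** E = 0"
  shows "rank (transpose D ** C ** E + transpose E ** C ** D) + 2 * CARD('k) \<le> 2 * CARD('n)"
proof -
  have "rank (transpose E) = CARD('k)"
    using assms(1) full_rank_injective rank_transpose by metis
  then have rank_CE: "rank (C ** E) + CARD('k) \<le> CARD('n)"
    using rank_add_rank_le_of_mult_eq_0[of "transpose E" "C ** E"] assms(3)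
    by (simp add: matrix_mul_assoc)
  have "rank (transpose D ** C ** E) \<le> rank (C ** E)"
    using rank_mul_le_right[of "transpose D" "C ** E"] by (simp add: matrix_mul_assoc)
  moreover have "transpose E ** C ** D = transpose (transpose D ** C ** E)"
    using assms(2) by (simp add: matrix_transpose_mul matrix_mul_assoc)
  ultimately have "rank (transpose E ** C ** D) \<le> rank (C ** E)"
    by (metis rank_transpose)
  then show ?thesis
    using rank_add_le[of "transpose D ** C ** E" "transpose E ** C ** D"]
      \<open>rank (transpose D ** C ** E) \<le> rank (C ** E)\<close> rank_CE
    by linarith
qed

lemma rank_le_of_isotropic_variation:
  fixes A C :: "real^'n^'n" and E D :: "real^'k^'n"
  assumes "inj ((*v) E)" and "transpose C = C" and "transpose E ** C ** E = 0"
    and "d \<noteq> 0"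
    and variation: "transpose D ** C ** E + transpose E ** C ** D = d *\<^sub>R (transpose E ** A ** E)"
  shows "rank A + 4 * CARD('k) \<le> 4 * CARD('n)"
proof -
  have "rank (transpose E ** A ** E) = rank (transpose D ** C ** E + transpose E ** C ** D)"
    unfolding variation using \<open>d \<noteq> 0\<close> by (simp add: rank_scaleR)
  then show ?thesis
    using rank_symmetrization_le_of_isotropic[OF assms(1-3), of D]
      rank_le_rank_transpose_mult_mult[OF assms(1), of A]
    by linarith
qed

lemma bounded_bilinear_matrix_matrix_mult:
  "bounded_bilinear ((**) :: real^'n^'m \<Rightarrow> real^'p^'n \<Rightarrow> real^'p^'m)"
proof -
  have "((A + B) ** C) = A ** C + B ** C" for A B :: "real^'n^'m" and C :: "real^'p^'n"
    by (simp add: matrix_matrix_mult_def vec_eq_iff sum.distrib distrib_right)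
  then have "bilinear ((**) :: real^'n^'m \<Rightarrow> real^'p^'n \<Rightarrow> real^'p^'m)"
    unfolding bilinear_def
    by (auto intro!: linearI simp: matrix_add_ldistrib matrix_scalar_ac scalar_matrix_assoc)
  then show ?thesis by (simp add: bilinear_conv_bounded_bilinear)
qed

lemma bounded_linear_transpose: "bounded_linear (transpose :: real^'n^'m \<Rightarrow> real^'m^'n)"
  by (auto intro!: linearI simp: transpose_def vec_eq_iff linear_conv_bounded_linear[symmetric])

lemmas matrix_mult_diff_scaleR_distribs =
  bounded_bilinear.diff_left[OF bounded_bilinear_matrix_matrix_mult]
  bounded_bilinear.diff_right[OF bounded_bilinear_matrix_matrix_mult]
  bounded_bilinear.scaleR_left[OF bounded_bilinear_matrix_matrix_mult]
  bounded_bilinear.scaleR_right[OF bounded_bilinear_matrix_matrix_mult]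

lemma has_vector_derivative_transpose_mult_mult:
  fixes M :: "real^'n^'n" and E :: "real \<Rightarrow> real^'k^'n"
  assumes "(E has_vector_derivative D) (at t within S)"
  shows "((\<lambda>s. transpose (E s) ** M ** E s) has_vector_derivative
           transpose D ** M ** E t + transpose (E t) ** M ** D) (at t within S)"
proof -
  note mult = bounded_bilinear.has_vector_derivative[OF bounded_bilinear_matrix_matrix_mult]
  have "((\<lambda>s. transpose (E s)) has_vector_derivative transpose D) (at t within S)"
    by (rule bounded_linear.has_vector_derivative[OF bounded_linear_transpose assms])
  from mult[OF mult[OF this has_vector_derivative_const] assms] show ?thesis
    by (simp add: add.commute)
qed

lemma derivative_isotropic_pencil:
  fixes A B :: "real^'n^'n" and E :: "real \<Rightarrow> real^'k^'n" and \<mu> :: "real \<Rightarrow> real"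
  assumes "open I" and "t \<in> I"
    and E: "(E has_vector_derivative D) (at t)" and \<mu>: "(\<mu> has_real_derivative d) (at t)"
    and isotropic:
      "\<And>s. s \<in> I \<Longrightarrow> transpose (E s) ** B ** E s = \<mu> s *\<^sub>R (transpose (E s) ** A ** E s)"
  shows "transpose D ** (B - \<mu> t *\<^sub>R A) ** E t + transpose (E t) ** (B - \<mu> t *\<^sub>R A) ** D
           = d *\<^sub>R (transpose (E t) ** A ** E t)"
proof -
  let ?F = "\<lambda>s. transpose (E s) ** B ** E s - \<mu> s *\<^sub>R (transpose (E s) ** A ** E s)"
  have "(?F has_vector_derivative
          (transpose D ** B ** E t + transpose (E t) ** B ** D)
          - (\<mu> t *\<^sub>R (transpose D ** A ** E t + transpose (E t) ** A ** D)
             + d *\<^sub>R (transpose (E t) ** A ** E t))) (at t)"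
    by (intro has_vector_derivative_diff has_vector_derivative_scaleR
        has_vector_derivative_transpose_mult_mult E \<mu>)
  moreover have "(?F has_vector_derivative 0) (at t)"
    by (rule has_vector_derivative_transform_within_open[OF has_vector_derivative_const assms(1,2)])
      (simp add: isotropic)
  ultimately have "(transpose D ** B ** E t + transpose (E t) ** B ** D)
          - (\<mu> t *\<^sub>R (transpose D ** A ** E t + transpose (E t) ** A ** D)
             + d *\<^sub>R (transpose (E t) ** A ** E t)) = 0"
    by (rule vector_derivative_unique_at)
  then show ?thesis
    by (simp add: matrix_mult_diff_scaleR_distribs algebra_simps)
qed

theorem lemma3p3:
  fixes A B :: "real^'n^'n"
    and E :: "real \<Rightarrow> real^'k^'n"
    and \<mu> :: "real \<Rightarrow> real"
    and I :: "real set"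
    and m :: nat
  assumes dims: "CARD('k) + m = CARD('n)"
    and symA: "transpose A = A"
    and symB: "transpose B = B"
    and I_open: "open I" and I_interval: "is_interval I" and I_ne: "I \<noteq> {}"
    and E_diff: "\<forall>t\<in>I. E differentiable (at t)"
    and E_inj: "\<forall>t\<in>I. inj ((*v) (E t))"
    and mu_diff: "\<forall>t\<in>I. \<mu> differentiable (at t)"
    and eq: "\<forall>t\<in>I. transpose (E t) ** B ** E t = \<mu> t *\<^sub>R (transpose (E t) ** A ** E t)"
    and rk: "rank A > 4 * m"
  shows "\<exists>c. \<forall>t\<in>I. \<mu> t = c"
proof (rule has_field_derivative_zero_constant)
  show "convex I" using I_interval by (rule is_interval_convex)
  fix t assume t: "t \<in> I"
  obtain D where E_deriv: "(E has_vector_derivative D) (at t)"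
    using E_diff t vector_derivative_works by blast
  have mu_deriv: "(\<mu> has_real_derivative deriv \<mu> t) (at t)"
    using mu_diff t DERIV_deriv_iff_real_differentiable by blast
  define C where "C = B - \<mu> t *\<^sub>R A"
  have "transpose C = C"
    using symA symB by (simp add: C_def transpose_def vec_eq_iff)
  moreover have "transpose (E t) ** C ** E t = 0"
    using eq t by (simp add: C_def matrix_mult_diff_scaleR_distribs)
  moreover have "transpose D ** C ** E t + transpose (E t) ** C ** D
      = deriv \<mu> t *\<^sub>R (transpose (E t) ** A ** E t)"
    unfolding C_def using derivative_isotropic_pencil[OF I_open t E_deriv mu_deriv] eq by blast
  ultimately have "deriv \<mu> t = 0"
    using rank_le_of_isotropic_variation[of "E t" C] E_inj t rk dims by fastforce
  then show "(\<mu> has_real_derivative 0) (at t within I)"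
    using mu_deriv by (simp add: has_field_derivative_at_within)
qed

end
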